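(* Let $\phi$ be a function from $\mathbb{Z}^d$ to $[0,+\infty)$ such that $\sum_{y\in\mathbb{Z}^d}\phi(y)^2=N$. For any $N\ge1$ and any $\alpha\in(0,1)$, $$P(f_N=\phi)\le\frac{\phi(0)}{\alpha}\exp\Big(-\frac12\mathcal{E}(\phi)+\alpha\sqrt{N|\mathrm{supp}\,\phi|}\Big).$$
   Context: $P$ is the law of the simple random walk $(S_k)$ on $\mathbb{Z}^d$ started at $0$; $L_N(x)=\sum_{k=0}^{N-1}1_{\{S_k=x\}}$ and $f_N=\sqrt{L_N}$. $\mathcal{E}(f)=\frac1{2d}\sum_{y,z\in\mathbb{Z}^d,|y-z|=1}(f(y)-f(z))^2$ (ordered pairs). $\mathrm{supp}\,\phi=\{y:\phi(y)\ne0\}$ and $|\cdot|$ denotes cardinality. *)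

theory Defs
  imports "HOL-Analysis.Analysis"
begin

text \<open>Points of Z^d are vectors of type int ^ 'd, with d = CARD('d).\<close>

definition sqnorm :: "int ^ 'd \<Rightarrow> int" where
  "sqnorm v = (\<Sum>i\<in>UNIV. (v $ i)^2)"

definition adjacent :: "int ^ 'd \<Rightarrow> int ^ 'd \<Rightarrow> bool" where
  "adjacent y z \<longleftrightarrow> sqnorm (y - z) = 1"

definition unit_steps :: "(int ^ 'd) set" where
  "unit_steps = {e. sqnorm e = 1}"

text \<open>Step sequences of length n; under P they are uniformly distributed.\<close>
definition step_seqs :: "nat \<Rightarrow> (int ^ 'd) list set" where
  "step_seqs n = {xs. length xs = n \<and> set xs \<subseteq> unit_steps}"

definition walk_pos :: "(int ^ 'd) list \<Rightarrow> nat \<Rightarrow> int ^ 'd" where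
  "walk_pos xs k = sum_list (take k xs)"

definition local_time :: "nat \<Rightarrow> (int ^ 'd) list \<Rightarrow> int ^ 'd \<Rightarrow> nat" where
  "local_time N xs x = card {k. k < N \<and> walk_pos xs k = x}"

text \<open>P(f_N = phi), where f_N = sqrt L_N. Only S_0..S_{N-1} matter, i.e. the
  first N-1 increments, which are uniform on unit_steps^(N-1).\<close>
definition prob_fN_eq :: "nat \<Rightarrow> (int ^ 'd \<Rightarrow> real) \<Rightarrow> real" where
  "prob_fN_eq N \<phi> =
     real (card {xs \<in> step_seqs (N - 1). \<forall>x. sqrt (real (local_time N xs x)) = \<phi> x})
     / real (card (unit_steps :: (int ^ 'd) set)) ^ (N - 1)"

text \<open>Dirichlet energy, sum over ordered pairs of neighbours.\<close>
definition dirichlet_energy :: "(int ^ 'd \<Rightarrow> real) \<Rightarrow> real" where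
  "dirichlet_energy f = (1 / (2 * real CARD('d))) *
     infsum (\<lambda>(y, z). (f y - f z)^2) {(y, z). adjacent y z}"

definition supp :: "(int ^ 'd \<Rightarrow> real) \<Rightarrow> (int ^ 'd) set" where
  "supp \<phi> = {y. \<phi> y \<noteq> 0}"

end

theory Submission
  imports Defs
begin

(* Change of measure.  Put h = max(phi, alpha), write A g (y) for the average of g over the
   neighbours of y, and let Q be the walk jumping from y to y + e with probability proportional
   to h (y + e); the Q-probabilities of all paths of a given length sum to 1.  For a path with
   f_N = phi, the ratio of its Q- and P-probabilities telescopes to
   A h (S_(N-1)) / h (S_0) * prod_(k<N) h (S_k) / A h (S_k).  Since t >= exp (1 - 1/t),
   h = phi >= 1 along the path and L_N = phi^2, the product is at least
   exp (sum_x phi(x)^2 - phi(x) A h (x)), while A h >= alpha and h (S_0) = phi(0).  Hence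
   P(f_N = phi) <= phi(0)/alpha * exp (sum_x phi(x) A h (x) - N).  Finally A h <= A phi + alpha,
   sum_x phi(x) A phi (x) - N = - E(phi)/2, and sum_x phi(x) <= sqrt (N |supp phi|) by
   Cauchy-Schwarz. *)

lemma prod_lessThan_ratio_telescope:
  fixes a b :: "nat \<Rightarrow> 'a :: field"
  assumes "\<And>k. a k \<noteq> 0" and "\<And>k. b k \<noteq> 0"
  shows "(\<Prod>k<n. a (Suc k) / b k) = b n / a 0 * (\<Prod>k<Suc n. a k / b k)"
  using assms by (induction n) (simp_all add: field_simps)

lemma exp_sum_le_prod:
  fixes t :: "'i \<Rightarrow> real"
  assumes "\<And>i. i \<in> I \<Longrightarrow> 0 < t i"
  shows "exp (\<Sum>i\<in>I. 1 - 1 / t i) \<le> (\<Prod>i\<in>I. t i)"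
proof (cases "finite I")
  case True
  have "exp (1 - 1 / t i) \<le> t i" if "i \<in> I" for i
  proof -
    have "1 / t i \<le> exp (1 / t i - 1)"
      using exp_ge_add_one_self[of "1 / t i - 1"] by simp
    then have "1 / exp (1 / t i - 1) \<le> t i"
      using assms[OF that] by (simp add: field_simps)
    then show ?thesis
      by (simp add: exp_diff)
  qed
  with True show ?thesis
    by (simp add: exp_sum prod_mono)
qed simp

lemma sum_shift_eq_sum:
  fixes f :: "'a :: ab_group_add \<Rightarrow> 'b :: comm_monoid_add"
  assumes "finite T" and "\<And>x. x \<notin> S \<Longrightarrow> f x = 0" and "(\<lambda>x. x - u) ` S \<subseteq> T"
  shows "(\<Sum>y\<in>T. f (y + u)) = sum f S"
proof -
  have "(\<Sum>y\<in>T. f (y + u)) = (\<Sum>y\<in>(\<lambda>x. x - u) ` S. f (y + u))"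
    using assms by (intro sum.mono_neutral_right) (auto simp: image_iff eq_diff_eq)
  also have "\<dots> = sum f S"
    by (subst sum.reindex) (auto simp: inj_on_def)
  finally show ?thesis .
qed

lemma sqnorm_axis: "sqnorm (axis i s) = s^2"
proof -
  have "sqnorm (axis i s) = (\<Sum>j\<in>UNIV. if j = i then s^2 else 0)"
    unfolding sqnorm_def by (intro sum.cong) (auto simp: axis_def)
  then show ?thesis
    by simp
qed

lemma sqnorm_eq_1_iff: "sqnorm e = 1 \<longleftrightarrow> (\<exists>i. \<exists>s\<in>{1, -1}. e = axis i s)"
proof
  assume e: "sqnorm e = 1"
  then have "e \<noteq> 0"
    by (auto simp: sqnorm_def)
  then obtain i where "e $ i \<noteq> 0"
    by (auto simp: vec_eq_iff)
  then have "(e $ i)^2 \<ge> 1"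
    by (simp add: int_one_le_iff_zero_less)
  moreover have "sqnorm e = (e $ i)^2 + (\<Sum>j\<in>UNIV - {i}. (e $ j)^2)"
    unfolding sqnorm_def by (simp add: sum.remove)
  moreover have "(\<Sum>j\<in>UNIV - {i}. (e $ j)^2) \<ge> 0"
    by (simp add: sum_nonneg)
  ultimately have ei: "(e $ i)^2 = 1" and rest: "(\<Sum>j\<in>UNIV - {i}. (e $ j)^2) = 0"
    using e by linarith+
  have "e $ j = 0" if "j \<noteq> i" for j
    using rest that by (subst (asm) sum_nonneg_eq_0_iff) auto
  then have "e = axis i (e $ i)"
    by (auto simp: axis_def vec_eq_iff)
  moreover have "e $ i \<in> {1, -1}"
    using ei by (simp add: power2_eq_1_iff)
  ultimately show "\<exists>i. \<exists>s\<in>{1, -1}. e = axis i s"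
    by blast
qed (auto simp: sqnorm_axis)

lemma unit_steps_eq_axis_image:
  "(unit_steps :: (int ^ 'd) set) = (\<lambda>(i, s). axis i s) ` (UNIV \<times> {1, -1})"
  unfolding unit_steps_def sqnorm_eq_1_iff by auto

lemma finite_unit_steps [simp]: "finite (unit_steps :: (int ^ 'd) set)"
  unfolding unit_steps_eq_axis_image by simp

lemma card_unit_steps: "card (unit_steps :: (int ^ 'd) set) = 2 * CARD('d)"
proof -
  have "inj_on (\<lambda>(i, s). axis i s :: int ^ 'd) (UNIV \<times> {1, -1})"
    by (auto simp: inj_on_def axis_eq_axis)
  then show ?thesis
    unfolding unit_steps_eq_axis_image by (simp add: card_image card_cartesian_product)
qed

lemma card_unit_steps_pos: "card (unit_steps :: (int ^ 'd) set) > 0"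
  by (simp add: card_unit_steps)

lemma adjacent_iff_diff_unit_step: "adjacent y z \<longleftrightarrow> z - y \<in> unit_steps"
proof -
  have "sqnorm (y - z) = sqnorm (z - y)"
    unfolding sqnorm_def by (intro sum.cong refl) (simp add: power2_commute)
  then show ?thesis
    by (simp add: adjacent_def unit_steps_def)
qed

lemma step_seqs_0: "step_seqs 0 = {[]}"
  by (auto simp: step_seqs_def)

lemma step_seqs_Suc: "step_seqs (Suc n) = (\<lambda>(u, ys). u # ys) ` (unit_steps \<times> step_seqs n)"
  by (auto simp: step_seqs_def length_Suc_conv image_iff)

lemma finite_step_seqs: "finite (step_seqs n :: (int ^ 'd) list set)"
  by (induction n) (simp_all add: step_seqs_0 step_seqs_Suc)

lemma walk_pos_0 [simp]: "walk_pos xs 0 = 0"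
  by (simp add: walk_pos_def)

lemma walk_pos_Cons_Suc [simp]: "walk_pos (u # ys) (Suc k) = u + walk_pos ys k"
  by (simp add: walk_pos_def)

lemma local_time_eq_0_iff: "local_time N xs x = 0 \<longleftrightarrow> x \<notin> walk_pos xs ` {..<N}"
  unfolding local_time_def by auto

lemma sum_local_time:
  fixes g :: "int ^ 'd \<Rightarrow> real"
  assumes "finite S" and "walk_pos xs ` {..<N} \<subseteq> S"
  shows "(\<Sum>k<N. g (walk_pos xs k)) = (\<Sum>x\<in>S. real (local_time N xs x) * g x)"
proof -
  have "(\<Sum>k<N. g (walk_pos xs k)) = (\<Sum>x\<in>S. \<Sum>k | k \<in> {..<N} \<and> walk_pos xs k = x. g (walk_pos xs k))"
    using sum.group[OF finite_lessThan assms, of "\<lambda>k. g (walk_pos xs k)"] by simp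
  also have "\<dots> = (\<Sum>x\<in>S. real (local_time N xs x) * g x)"
    by (intro sum.cong refl) (simp add: local_time_def)
  finally show ?thesis .
qed

definition fN :: "nat \<Rightarrow> (int ^ 'd) list \<Rightarrow> int ^ 'd \<Rightarrow> real" where
  "fN N xs x = sqrt (real (local_time N xs x))"

lemma fN_squared: "(fN N xs x)^2 = real (local_time N xs x)"
  by (simp add: fN_def)

lemma supp_fN: "supp (fN N xs) = walk_pos xs ` {..<N}"
  by (auto simp: supp_def fN_def local_time_eq_0_iff)

lemma finite_supp_fN: "finite (supp (fN N xs))"
  by (simp add: supp_fN)

lemma zero_in_supp_fN: "0 < N \<Longrightarrow> 0 \<in> supp (fN N xs)"
  unfolding supp_fN by (auto intro: image_eqI[where x = 0])

lemma fN_ge_1: "x \<in> supp (fN N xs) \<Longrightarrow> 1 \<le> fN N xs x"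
  by (auto simp: supp_def fN_def)

definition nbr_avg :: "(int ^ 'd \<Rightarrow> real) \<Rightarrow> int ^ 'd \<Rightarrow> real" where
  "nbr_avg f y = (\<Sum>u\<in>unit_steps. f (y + u)) / card (unit_steps :: (int ^ 'd) set)"

lemma nbr_avg_const [simp]: "nbr_avg (\<lambda>_. c) y = c"
  by (simp add: nbr_avg_def card_unit_steps)

lemma nbr_avg_add: "nbr_avg (\<lambda>x. f x + g x) y = nbr_avg f y + nbr_avg g y"
  by (simp add: nbr_avg_def sum.distrib add_divide_distrib)

lemma nbr_avg_mono: "(\<And>x. f x \<le> g x) \<Longrightarrow> nbr_avg f y \<le> nbr_avg g y"
  unfolding nbr_avg_def by (intro divide_right_mono sum_mono) auto

lemma nbr_avg_pos: "(\<And>x. 0 < h x) \<Longrightarrow> 0 < nbr_avg h y"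
  unfolding nbr_avg_def using card_unit_steps_pos
  by (intro divide_pos_pos sum_pos) (auto simp: card_gt_0_iff)

lemma infsum_adjacent_eq_sum:
  fixes g :: "(int ^ 'd) \<times> (int ^ 'd) \<Rightarrow> real"
  assumes "finite T" and "\<And>y z. adjacent y z \<Longrightarrow> y \<notin> T \<Longrightarrow> g (y, z) = 0"
  shows "infsum g {(y, z). adjacent y z} = (\<Sum>y\<in>T. \<Sum>u\<in>unit_steps. g (y, y + u))"
proof -
  let ?B = "(\<lambda>(y, u). (y, y + u)) ` (T \<times> unit_steps)"
  have inj: "inj_on (\<lambda>(y, u). (y, y + u)) (T \<times> unit_steps)"
    by (auto simp: inj_on_def)
  have "?B \<subseteq> {(y, z). adjacent y z}"
    by (auto simp: adjacent_iff_diff_unit_step)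
  moreover have "g p = 0" if "p \<in> {(y, z). adjacent y z} - ?B" for p
  proof -
    obtain y z where p: "p = (y, z)"
      by (cases p)
    with that have adj: "adjacent y z"
      by simp
    have "y \<notin> T"
    proof
      assume "y \<in> T"
      then have "(y, z) \<in> ?B"
        using adj by (auto simp: adjacent_iff_diff_unit_step intro!: rev_image_eqI[of "(y, z - y)"])
      with that p show False
        by simp
    qed
    then show ?thesis
      using assms(2) adj p by simp
  qed
  ultimately have "infsum g {(y, z). adjacent y z} = infsum g ?B"
    by (intro infsum_cong_neutral) auto
  also have "\<dots> = sum g ?B"
    using assms(1) by (intro infsum_finite) simp
  also have "\<dots> = (\<Sum>(y, u)\<in>T \<times> unit_steps. g (y, y + u))"
    by (subst sum.reindex[OF inj]) (simp add: case_prod_unfold)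
  finally show ?thesis
    by (simp add: sum.cartesian_product)
qed

lemma dirichlet_energy_finite_support:
  fixes \<phi> :: "int ^ 'd \<Rightarrow> real"
  assumes fin: "finite S" and zero: "\<And>x. x \<notin> S \<Longrightarrow> \<phi> x = 0"
  shows "dirichlet_energy \<phi> = 2 * (\<Sum>x\<in>S. \<phi> x * (\<phi> x - nbr_avg \<phi> x))"
proof -
  let ?U = "unit_steps :: (int ^ 'd) set"
  define T where "T = S \<union> (\<lambda>(x, u). x - u) ` (S \<times> ?U)"
  have finT: "finite T" and ST: "S \<subseteq> T"
    using fin by (auto simp: T_def)
  have shift: "(\<lambda>x. x - u) ` S \<subseteq> T" if "u \<in> ?U" for u
    using that by (auto simp: T_def)
  have "(\<phi> y - \<phi> z)^2 = 0" if "adjacent y z" "y \<notin> T" for y z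
  proof -
    have "z \<notin> S"
      using that shift[of "z - y"] by (auto simp: adjacent_iff_diff_unit_step)
    then show ?thesis
      using that ST zero by auto
  qed
  then have "infsum (\<lambda>(y, z). (\<phi> y - \<phi> z)^2) {(y, z). adjacent y z}
      = (\<Sum>y\<in>T. \<Sum>u\<in>?U. (\<phi> y - \<phi> (y + u))^2)"
    using finT by (subst infsum_adjacent_eq_sum) auto
  also have "\<dots> = (\<Sum>u\<in>?U. (\<Sum>y\<in>T. (\<phi> y)^2) + (\<Sum>y\<in>T. (\<phi> (y + u))^2) - 2 * (\<Sum>y\<in>T. \<phi> y * \<phi> (y + u)))"
    by (subst sum.swap) (simp add: power2_diff sum.distrib sum_subtractf sum_distrib_left mult.assoc)
  also have "\<dots> = (\<Sum>u\<in>?U. 2 * (\<Sum>x\<in>S. (\<phi> x)^2) - 2 * (\<Sum>x\<in>S. \<phi> x * \<phi> (x + u)))"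
  proof (intro sum.cong refl)
    fix u assume "u \<in> ?U"
    have "(\<Sum>y\<in>T. g y) = sum g S" if "\<And>x. x \<notin> S \<Longrightarrow> g x = 0" for g :: "_ \<Rightarrow> real"
      using that finT ST by (intro sum.mono_neutral_right) auto
    moreover have "(\<Sum>y\<in>T. (\<phi> (y + u))^2) = (\<Sum>x\<in>S. (\<phi> x)^2)"
      using finT zero shift[OF \<open>u \<in> ?U\<close>] by (intro sum_shift_eq_sum[where f = "\<lambda>x. (\<phi> x)^2"]) auto
    ultimately show "(\<Sum>y\<in>T. (\<phi> y)^2) + (\<Sum>y\<in>T. (\<phi> (y + u))^2) - 2 * (\<Sum>y\<in>T. \<phi> y * \<phi> (y + u))
        = 2 * (\<Sum>x\<in>S. (\<phi> x)^2) - 2 * (\<Sum>x\<in>S. \<phi> x * \<phi> (x + u))"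
      using zero by simp
  qed
  also have "\<dots> = 2 * card ?U * (\<Sum>x\<in>S. (\<phi> x)^2) - 2 * (\<Sum>x\<in>S. \<phi> x * (\<Sum>u\<in>?U. \<phi> (x + u)))"
    by (simp add: sum_subtractf sum_distrib_left sum.swap[where A = ?U] mult_ac)
  also have "\<dots> = 2 * card ?U * (\<Sum>x\<in>S. \<phi> x * (\<phi> x - nbr_avg \<phi> x))"
  proof -
    have "\<phi> x * (\<Sum>u\<in>?U. \<phi> (x + u)) = card ?U * (\<phi> x * nbr_avg \<phi> x)" for x
      using card_unit_steps_pos by (simp add: nbr_avg_def)
    then show ?thesis
      by (simp add: right_diff_distrib sum_subtractf sum_distrib_left power2_eq_square mult.assoc)
  qed
  finally show ?thesis
    by (simp add: dirichlet_energy_def card_unit_steps)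
qed

definition hwalk_prob :: "(int ^ 'd \<Rightarrow> real) \<Rightarrow> int ^ 'd \<Rightarrow> (int ^ 'd) list \<Rightarrow> real" where
  "hwalk_prob h y xs =
     (\<Prod>k<length xs. h (y + walk_pos xs (Suc k)) / (\<Sum>u\<in>unit_steps. h (y + walk_pos xs k + u)))"

lemma hwalk_prob_nonneg: "(\<And>x. 0 \<le> h x) \<Longrightarrow> 0 \<le> hwalk_prob h y xs"
  unfolding hwalk_prob_def by (intro prod_nonneg divide_nonneg_nonneg sum_nonneg) auto

lemma hwalk_prob_Cons:
  "hwalk_prob h y (u # ys) = h (y + u) / (\<Sum>v\<in>unit_steps. h (y + v)) * hwalk_prob h (y + u) ys"
  unfolding hwalk_prob_def by (simp add: prod.lessThan_Suc_shift add.assoc del: prod.lessThan_Suc)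

lemma sum_hwalk_prob:
  assumes pos: "\<And>x. 0 < h x"
  shows "(\<Sum>xs\<in>step_seqs n. hwalk_prob h y xs) = 1"
proof (induction n arbitrary: y)
  case 0
  show ?case
    by (simp add: step_seqs_0 hwalk_prob_def)
next
  case (Suc n)
  have inj: "inj_on (\<lambda>(u, ys). u # ys) (unit_steps \<times> step_seqs n)"
    by (auto simp: inj_on_def)
  have "(\<Sum>u\<in>unit_steps. h (y + u)) > 0"
    using card_unit_steps_pos pos by (intro sum_pos) (auto simp: card_gt_0_iff)
  have "(\<Sum>xs\<in>step_seqs (Suc n). hwalk_prob h y xs)
      = (\<Sum>u\<in>unit_steps. \<Sum>ys\<in>step_seqs n. hwalk_prob h y (u # ys))"
    by (simp add: step_seqs_Suc sum.reindex[OF inj] prod.case_distrib sum.cartesian_product)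
  also have "\<dots> = (\<Sum>u\<in>unit_steps. h (y + u) / (\<Sum>v\<in>unit_steps. h (y + v)))"
    by (simp only: hwalk_prob_Cons flip: sum_distrib_left) (simp add: Suc.IH)
  also have "\<dots> = 1"
    using \<open>(\<Sum>u\<in>unit_steps. h (y + u)) > 0\<close> by (simp flip: sum_divide_distrib)
  finally show ?case .
qed

lemma hwalk_prob_telescope:
  fixes h :: "int ^ 'd \<Rightarrow> real" and y :: "int ^ 'd" and xs :: "(int ^ 'd) list"
  assumes pos: "\<And>x. 0 < h x"
  defines "P \<equiv> \<lambda>k. y + walk_pos xs k"
  shows "hwalk_prob h y xs = nbr_avg h (P (length xs)) / h y
      * (\<Prod>k<Suc (length xs). h (P k) / nbr_avg h (P k)) / card (unit_steps :: (int ^ 'd) set) ^ length xs"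
proof -
  let ?K = "real (card (unit_steps :: (int ^ 'd) set))"
  have nonzero: "h x \<noteq> 0" "nbr_avg h x \<noteq> 0" for x
    using pos[of x] nbr_avg_pos[of h x, OF pos] by linarith+
  have "hwalk_prob h y xs = (\<Prod>k<length xs. h (P (Suc k)) / nbr_avg h (P k) / ?K)"
    unfolding hwalk_prob_def P_def nbr_avg_def using card_unit_steps_pos
    by (intro prod.cong refl) (simp add: add.assoc)
  also have "\<dots> = (\<Prod>k<length xs. h (P (Suc k)) / nbr_avg h (P k)) / ?K ^ length xs"
    by (simp add: prod_dividef prod.distrib)
  also have "(\<Prod>k<length xs. h (P (Suc k)) / nbr_avg h (P k))
      = nbr_avg h (P (length xs)) / h (P 0) * (\<Prod>k<Suc (length xs). h (P k) / nbr_avg h (P k))"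
    by (rule prod_lessThan_ratio_telescope) (simp_all add: nonzero)
  finally show ?thesis
    by (simp add: P_def)
qed

lemma exp_le_prod_ratio_along_walk:
  fixes N :: nat and xs :: "(int ^ 'd) list" and \<alpha> :: real
  defines "\<phi> \<equiv> fN N xs"
  defines "h \<equiv> \<lambda>x. max (\<phi> x) \<alpha>"
  assumes \<alpha>: "0 < \<alpha>" "\<alpha> \<le> 1"
  shows "exp (- (\<Sum>x\<in>supp \<phi>. \<phi> x * nbr_avg h x - (\<phi> x)^2))
      \<le> (\<Prod>k<N. h (walk_pos xs k) / nbr_avg h (walk_pos xs k))"
proof -
  let ?S = "supp \<phi>"
  let ?P = "walk_pos xs"
  have h_pos: "0 < h x" for x
    using \<alpha> by (simp add: h_def)
  have "(\<Sum>k<N. 1 - nbr_avg h (?P k) / h (?P k))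
      = (\<Sum>x\<in>?S. real (local_time N xs x) * (1 - nbr_avg h x / h x))"
    by (intro sum_local_time) (simp_all add: \<phi>_def finite_supp_fN supp_fN)
  also have "\<dots> = - (\<Sum>x\<in>?S. \<phi> x * nbr_avg h x - (\<phi> x)^2)"
  proof -
    have "real (local_time N xs x) * (1 - nbr_avg h x / h x) = - (\<phi> x * nbr_avg h x - (\<phi> x)^2)"
      if "x \<in> ?S" for x
    proof -
      have "h x = \<phi> x" "1 \<le> \<phi> x"
        using fN_ge_1[OF that[unfolded \<phi>_def]] \<alpha> by (simp_all add: h_def \<phi>_def)
      moreover have "real (local_time N xs x) = (\<phi> x)^2"
        by (simp add: \<phi>_def fN_squared)
      ultimately show ?thesis
        by (simp add: power2_eq_square field_simps)
    qed
    then show ?thesis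
      by (simp add: sum_negf[symmetric])
  qed
  finally show ?thesis
    using exp_sum_le_prod[of "{..<N}" "\<lambda>k. h (?P k) / nbr_avg h (?P k)"] h_pos nbr_avg_pos[of h, OF h_pos]
    by simp
qed

lemma hwalk_prob_ge:
  fixes xs :: "(int ^ 'd) list" and \<alpha> :: real
  defines "\<phi> \<equiv> fN (Suc (length xs)) xs"
  defines "h \<equiv> \<lambda>x. max (\<phi> x) \<alpha>"
  assumes \<alpha>: "0 < \<alpha>" "\<alpha> \<le> 1"
  shows "\<alpha> / \<phi> 0 * exp (- (\<Sum>x\<in>supp \<phi>. \<phi> x * nbr_avg h x - (\<phi> x)^2))
      / card (unit_steps :: (int ^ 'd) set) ^ length xs \<le> hwalk_prob h 0 xs"
proof -
  let ?P = "walk_pos xs"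
  have h_pos: "0 < h x" for x
    using \<alpha> by (simp add: h_def)
  have avg_ge: "\<alpha> \<le> nbr_avg h y" for y
    using nbr_avg_mono[of "\<lambda>_. \<alpha>" h y] by (simp add: h_def)
  have "1 \<le> \<phi> 0"
    unfolding \<phi>_def by (intro fN_ge_1 zero_in_supp_fN) simp
  then have h0: "h 0 = \<phi> 0"
    using \<alpha> by (simp add: h_def)
  have "\<alpha> / \<phi> 0 * exp (- (\<Sum>x\<in>supp \<phi>. \<phi> x * nbr_avg h x - (\<phi> x)^2))
      \<le> nbr_avg h (?P (length xs)) / h 0 * (\<Prod>k<Suc (length xs). h (?P k) / nbr_avg h (?P k))"
    using exp_le_prod_ratio_along_walk[where N = "Suc (length xs)" and xs = xs and \<alpha> = \<alpha>]
      avg_ge[of "?P (length xs)"] \<open>1 \<le> \<phi> 0\<close> h0 \<alpha>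
    unfolding \<phi>_def h_def
    by (intro mult_mono divide_right_mono) (simp_all add: divide_right_mono del: prod.lessThan_Suc)
  then show ?thesis
    unfolding hwalk_prob_telescope[OF h_pos, where y = 0] add_0 by (rule divide_right_mono) simp
qed

lemma prob_fN_eq_le:
  fixes \<phi> :: "int ^ 'd \<Rightarrow> real"
  assumes "xs\<^sub>0 \<in> step_seqs (N - 1)" and "fN N xs\<^sub>0 = \<phi>" and "0 < N" and "0 < \<alpha>" and "\<alpha> \<le> 1"
  shows "prob_fN_eq N \<phi>
    \<le> \<phi> 0 / \<alpha> * exp (\<Sum>x\<in>supp \<phi>. \<phi> x * nbr_avg (\<lambda>x. max (\<phi> x) \<alpha>) x - (\<phi> x)^2)"
proof -
  let ?K = "real (card (unit_steps :: (int ^ 'd) set))"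
  let ?h = "\<lambda>x. max (\<phi> x) \<alpha>"
  let ?X = "\<Sum>x\<in>supp \<phi>. \<phi> x * nbr_avg ?h x - (\<phi> x)^2"
  define n where "n = N - 1"
  define A where "A = {xs \<in> step_seqs n. \<forall>x. sqrt (real (local_time N xs x)) = \<phi> x}"
  define c where "c = \<alpha> / \<phi> 0 * exp (- ?X) / ?K ^ n"
  have N: "N = Suc n"
    using \<open>0 < N\<close> by (simp add: n_def)
  have "1 \<le> \<phi> 0"
    using fN_ge_1 zero_in_supp_fN \<open>0 < N\<close> assms(2) by blast
  have c_le: "c \<le> hwalk_prob ?h 0 xs" if "xs \<in> A" for xs
  proof -
    have "fN (Suc (length xs)) xs = \<phi>" and "length xs = n"
      using that by (auto simp: A_def N fN_def step_seqs_def)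
    then show ?thesis
      using hwalk_prob_ge[of \<alpha> xs] assms(4,5) by (simp add: c_def)
  qed
  have "real (card A) * c = (\<Sum>xs\<in>A. c)"
    by simp
  also have "\<dots> \<le> (\<Sum>xs\<in>A. hwalk_prob ?h 0 xs)"
    using c_le by (rule sum_mono)
  also have "\<dots> \<le> (\<Sum>xs\<in>step_seqs n. hwalk_prob ?h 0 xs)"
    using \<open>0 < \<alpha>\<close>
    by (intro sum_mono2[OF finite_step_seqs] hwalk_prob_nonneg) (auto simp: A_def)
  also have "\<dots> = 1"
    using \<open>0 < \<alpha>\<close> by (intro sum_hwalk_prob) simp
  finally have "real (card A) * c \<le> 1" .
  have "prob_fN_eq N \<phi> = real (card A) * c * (\<phi> 0 / \<alpha> * exp ?X)"
    using \<open>1 \<le> \<phi> 0\<close> \<open>0 < \<alpha>\<close> card_unit_steps_pos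
    by (simp add: prob_fN_eq_def A_def n_def c_def exp_minus field_simps)
  also have "\<dots> \<le> \<phi> 0 / \<alpha> * exp ?X"
    using \<open>real (card A) * c \<le> 1\<close> \<open>1 \<le> \<phi> 0\<close> \<open>0 < \<alpha>\<close>
    by (intro mult_left_le_one_le) (auto simp: c_def)
  finally show ?thesis .
qed

lemma sum_nbr_avg_max_le:
  fixes \<phi> :: "int ^ 'd \<Rightarrow> real"
  assumes fin: "finite S" and zero: "\<And>x. x \<notin> S \<Longrightarrow> \<phi> x = 0"
    and nonneg: "\<And>x. 0 \<le> \<phi> x" and "0 \<le> \<alpha>"
  shows "(\<Sum>x\<in>S. \<phi> x * nbr_avg (\<lambda>x. max (\<phi> x) \<alpha>) x - (\<phi> x)^2)
    \<le> - (1/2) * dirichlet_energy \<phi> + \<alpha> * sqrt (real (card S) * (\<Sum>x\<in>S. (\<phi> x)^2))"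
proof -
  have avg: "nbr_avg (\<lambda>x. max (\<phi> x) \<alpha>) x \<le> nbr_avg \<phi> x + \<alpha>" for x
    using nbr_avg_mono[of "\<lambda>x. max (\<phi> x) \<alpha>" "\<lambda>x. \<phi> x + \<alpha>" x] nonneg \<open>0 \<le> \<alpha>\<close>
    by (simp add: nbr_avg_add)
  have energy: "(\<Sum>x\<in>S. \<phi> x * nbr_avg \<phi> x - (\<phi> x)^2) = - (1/2) * dirichlet_energy \<phi>"
  proof -
    have "(\<Sum>x\<in>S. \<phi> x * nbr_avg \<phi> x - (\<phi> x)^2) = - (\<Sum>x\<in>S. \<phi> x * (\<phi> x - nbr_avg \<phi> x))"
      by (simp add: sum_subtractf right_diff_distrib power2_eq_square)
    with dirichlet_energy_finite_support[of S \<phi>, OF fin zero] show ?thesis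
      by linarith
  qed
  have cauchy_schwarz: "(\<Sum>x\<in>S. \<phi> x) \<le> sqrt (real (card S) * (\<Sum>x\<in>S. (\<phi> x)^2))"
    using sum_squared_le_sum_of_squares[of \<phi> S] by (intro real_le_rsqrt) (simp add: mult.commute)
  have "(\<Sum>x\<in>S. \<phi> x * nbr_avg (\<lambda>x. max (\<phi> x) \<alpha>) x - (\<phi> x)^2)
      \<le> (\<Sum>x\<in>S. \<phi> x * (nbr_avg \<phi> x + \<alpha>) - (\<phi> x)^2)"
    using avg nonneg by (intro sum_mono diff_right_mono mult_left_mono) auto
  also have "\<dots> = (\<Sum>x\<in>S. \<phi> x * nbr_avg \<phi> x - (\<phi> x)^2) + \<alpha> * (\<Sum>x\<in>S. \<phi> x)"
    by (simp add: sum_distrib_left algebra_simps flip: sum.distrib)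
  also have "\<dots> \<le> - (1/2) * dirichlet_energy \<phi> + \<alpha> * sqrt (real (card S) * (\<Sum>x\<in>S. (\<phi> x)^2))"
    using energy cauchy_schwarz \<open>0 \<le> \<alpha>\<close> by (simp add: mult_left_mono)
  finally show ?thesis .
qed

lemma prob_fN_eq_nonzeroE:
  assumes "prob_fN_eq N \<phi> \<noteq> 0"
  obtains xs where "xs \<in> step_seqs (N - 1)" and "fN N xs = \<phi>"
proof -
  have "card {xs \<in> step_seqs (N - 1). \<forall>x. sqrt (real (local_time N xs x)) = \<phi> x} \<noteq> 0"
    using assms by (auto simp: prob_fN_eq_def)
  then have "{xs \<in> step_seqs (N - 1). \<forall>x. sqrt (real (local_time N xs x)) = \<phi> x} \<noteq> {}"
    by (metis card.empty)
  then obtain xs where xs: "xs \<in> step_seqs (N - 1)"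
    and profile: "\<forall>x. sqrt (real (local_time N xs x)) = \<phi> x"
    by blast
  from profile have "fN N xs = \<phi>"
    by (auto simp: fN_def)
  with xs show thesis
    by (rule that)
qed

theorem proposition3p2:
  fixes \<phi> :: "int ^ 'd \<Rightarrow> real" and N :: nat and \<alpha> :: real
  assumes nonneg: "\<And>y. \<phi> y \<ge> 0"
    and mass: "((\<lambda>y. (\<phi> y)^2) has_sum real N) UNIV"
    and N: "N \<ge> 1"
    and \<alpha>: "0 < \<alpha>" "\<alpha> < 1"
  shows "prob_fN_eq N \<phi> \<le>
     \<phi> 0 / \<alpha> * exp (- (1/2) * dirichlet_energy \<phi>
                       + \<alpha> * sqrt (real N * real (card (supp \<phi>))))"
proof (cases "prob_fN_eq N \<phi> = 0")
  case True
  then show ?thesis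
    using nonneg[of 0] \<alpha> by simp
next
  case False
  then obtain xs where xs: "xs \<in> step_seqs (N - 1)" and profile: "fN N xs = \<phi>"
    by (rule prob_fN_eq_nonzeroE)
  have fin: "finite (supp \<phi>)" and zero: "\<And>x. x \<notin> supp \<phi> \<Longrightarrow> \<phi> x = 0"
    using finite_supp_fN[of N xs] by (simp_all add: profile supp_def)
  have "((\<lambda>y. (\<phi> y)^2) has_sum (\<Sum>x\<in>supp \<phi>. (\<phi> x)^2)) UNIV"
    using fin zero by (intro has_sum_finite_neutralI) auto
  then have "(\<Sum>x\<in>supp \<phi>. (\<phi> x)^2) = real N"
    using mass by (rule has_sum_unique)
  then have exponent: "(\<Sum>x\<in>supp \<phi>. \<phi> x * nbr_avg (\<lambda>x. max (\<phi> x) \<alpha>) x - (\<phi> x)^2)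
      \<le> - (1/2) * dirichlet_energy \<phi> + \<alpha> * sqrt (real N * real (card (supp \<phi>)))"
    using sum_nbr_avg_max_le[of "supp \<phi>" \<phi> \<alpha>, OF fin zero nonneg] \<alpha> by (simp add: mult.commute)
  have "prob_fN_eq N \<phi>
      \<le> \<phi> 0 / \<alpha> * exp (\<Sum>x\<in>supp \<phi>. \<phi> x * nbr_avg (\<lambda>x. max (\<phi> x) \<alpha>) x - (\<phi> x)^2)"
    using prob_fN_eq_le[OF xs profile] N \<alpha> by simp
  also have "\<dots> \<le> \<phi> 0 / \<alpha> * exp (- (1/2) * dirichlet_energy \<phi>
                       + \<alpha> * sqrt (real N * real (card (supp \<phi>))))"
    using exponent nonneg[of 0] \<alpha> by (intro mult_left_mono) auto
  finally show ?thesis .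
qed

end
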